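(* Let $d\ge 2$. (a) Every domain $D\subset T_d$ with $|D|\le d$ is optimal. (b) Every full domain in $T_d$ is optimal. (c) If $D\subset T_d$ is a domain with $|D|\ge 2$ and $|R(D)|=1$, then $D$ is optimal. (d) If $D\subset T_d$ is an optimal domain with $|D|\ge 2$, then $|R(D)|\le d-2$.
   Context: $T_d$ is the $d$-regular tree (connected, acyclic, every vertex of degree $d$). A domain is a finite nonempty connected set $D$ of vertices of $T_d$, identified with its induced subgraph. For $x\in D$, $\deg_D(x)$ is the number of neighbours of $x$ lying in $D$. The (inner vertex) boundary is $\partial D=\{x\in D:\deg_D(x)<d\}$. For $k\ge1$, $I_d(k)=\min\{|\partial D| : D\subset T_d \text{ a domain with } |D|=k\}$, and a domain $D$ is optimal if $|\partial D|=I_d(|D|)$. For a domain with $|D|\ge 2$: the leaves are $L(D)=\{x\in\partial D:\deg_D(x)=1\}$, the residual boundary is $R(D)=\{x\in\partial D: 2\le \deg_D(x)\le d-1\}$, and $D$ is full if $R(D)=\emptyset$ (equivalently $\partial D=L(D)$). *)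

theory Defs
  imports Main
begin

text \<open>Concrete model of the d-regular tree T_d: the Cayley graph of the free product of
  d copies of Z/2. Vertices are reduced words: lists over letters 0..d-1 with no two
  consecutive letters equal.\<close>

definition tree_vert :: "nat \<Rightarrow> nat list set" where
  "tree_vert d = {xs. set xs \<subseteq> {..<d} \<and> successively (\<noteq>) xs}"

definition tree_adj :: "nat \<Rightarrow> nat list \<Rightarrow> nat list \<Rightarrow> bool" where
  "tree_adj d x y \<longleftrightarrow> x \<in> tree_vert d \<and> y \<in> tree_vert d \<and>
     ((\<exists>a. y = a # x) \<or> (\<exists>a. x = a # y))"

definition is_domain :: "nat \<Rightarrow> nat list set \<Rightarrow> bool" where
  "is_domain d D \<longleftrightarrow> finite D \<and> D \<noteq> {} \<and> D \<subseteq> tree_vert d \<and>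
     (\<forall>x\<in>D. \<forall>y\<in>D. (\<lambda>u v. u \<in> D \<and> v \<in> D \<and> tree_adj d u v)\<^sup>*\<^sup>* x y)"

definition degD :: "nat \<Rightarrow> nat list set \<Rightarrow> nat list \<Rightarrow> nat" where
  "degD d D x = card {y \<in> D. tree_adj d x y}"

definition bdry :: "nat \<Rightarrow> nat list set \<Rightarrow> nat list set" where
  "bdry d D = {x \<in> D. degD d D x < d}"

definition Iso :: "nat \<Rightarrow> nat \<Rightarrow> nat" where
  "Iso d k = Inf {card (bdry d D) | D. is_domain d D \<and> card D = k}"

definition optimal :: "nat \<Rightarrow> nat list set \<Rightarrow> bool" where
  "optimal d D \<longleftrightarrow> card (bdry d D) = Iso d (card D)"

definition leavesD :: "nat \<Rightarrow> nat list set \<Rightarrow> nat list set" where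
  "leavesD d D = {x \<in> bdry d D. degD d D x = 1}"

definition resid :: "nat \<Rightarrow> nat list set \<Rightarrow> nat list set" where
  "resid d D = {x \<in> bdry d D. 2 \<le> degD d D x \<and> degD d D x \<le> d - 1}"

definition full :: "nat \<Rightarrow> nat list set \<Rightarrow> bool" where
  "full d D \<longleftrightarrow> resid d D = {}"

end

theory Submission
  imports Defs "HOL-Library.Sublist"
begin

text \<open>A domain D with k \<ge> 2 vertices is a subtree, so its degrees sum to 2(k - 1). Interior
  vertices have degree d and leaves degree 1, so with s(D) = excess d D, the sum of deg x - 1
  over the residual boundary, this reads (d - 1) |D - \<partial>D| + s(D) + 2 = k, i.e.
  |\<partial>D| = k - (k - 2) div (d - 1) + s(D) div (d - 1). Growing a domain one vertex at a time,
  always attaching the new leaf to the residual vertex if there is one, keeps |R| \<le> 1 and hence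
  s < d - 1. Therefore I_d(k) = k - (k - 2) div (d - 1), and a domain is optimal iff
  s(D) \<le> d - 2. Parts (b)-(d) follow from |R(D)| \<le> s(D) \<le> |R(D)| (d - 2); part (a) holds
  because a domain with at most d vertices consists of boundary only.\<close>

lemma tree_adj_sym: "tree_adj d x y \<longleftrightarrow> tree_adj d y x"
  unfolding tree_adj_def by auto

lemma tree_adj_irrefl: "\<not> tree_adj d x x"
  unfolding tree_adj_def by auto

lemma tree_adj_iff_parent:
  assumes "x \<in> tree_vert d" and "y \<in> tree_vert d"
  shows "tree_adj d x y \<longleftrightarrow> (y \<noteq> [] \<and> tl y = x) \<or> (x \<noteq> [] \<and> tl x = y)"
  using assms unfolding tree_adj_def by (cases x; cases y) auto

definition tree_nb :: "nat list \<Rightarrow> nat \<Rightarrow> nat list" where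
  "tree_nb x a = (if x \<noteq> [] \<and> a = hd x then tl x else a # x)"

lemma inj_tree_nb: "inj (tree_nb x)"
  unfolding tree_nb_def inj_def by (auto dest: arg_cong[where f = length])

lemma tree_neighbours:
  assumes "x \<in> tree_vert d"
  shows "{y. tree_adj d x y} = tree_nb x ` {..<d}"
proof
  show "{y. tree_adj d x y} \<subseteq> tree_nb x ` {..<d}"
  proof
    fix y assume "y \<in> {y. tree_adj d x y}"
    then have y: "y \<in> tree_vert d" and "(\<exists>a. y = a # x) \<or> (\<exists>a. x = a # y)"
      unfolding tree_adj_def by auto
    then consider a where "y = a # x" | a where "x = a # y" by blast
    then show "y \<in> tree_nb x ` {..<d}"
    proof cases
      case 1
      with y have "a < d" "tree_nb x a = y"
        unfolding tree_vert_def tree_nb_def by (cases x; auto)+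
      then show ?thesis by force
    next
      case 2
      with assms have "a < d" "tree_nb x a = y"
        unfolding tree_vert_def tree_nb_def by auto
      then show ?thesis by force
    qed
  qed
next
  show "tree_nb x ` {..<d} \<subseteq> {y. tree_adj d x y}"
    using assms unfolding tree_adj_def tree_vert_def tree_nb_def
    by (cases x) (auto simp: successively_Cons)
qed

lemma card_tree_neighbours: "x \<in> tree_vert d \<Longrightarrow> card {y. tree_adj d x y} = d"
  by (simp add: tree_neighbours card_image inj_on_subset[OF inj_tree_nb])

lemma finite_tree_neighbours: "finite {y. tree_adj d x y}"
proof (cases "x \<in> tree_vert d")
  case False
  then show ?thesis unfolding tree_adj_def by simp
qed (simp add: tree_neighbours)

lemma degD_le: "degD d D x \<le> d"
proof (cases "x \<in> tree_vert d")
  case True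
  have "degD d D x \<le> card {y. tree_adj d x y}"
    unfolding degD_def by (intro card_mono finite_tree_neighbours) auto
  with True show ?thesis by (simp add: card_tree_neighbours)
next
  case False
  then show ?thesis unfolding degD_def tree_adj_def by simp
qed

lemma exists_neighbour_notin:
  assumes "x \<in> tree_vert d" and "degD d D x < d"
  obtains y where "tree_adj d x y" and "y \<notin> D"
proof -
  have "{y. tree_adj d x y} \<noteq> {y \<in> D. tree_adj d x y}"
    using assms card_tree_neighbours unfolding degD_def by force
  then show ?thesis using that by blast
qed

lemma domain_rtranclp:
  "is_domain d D \<Longrightarrow> x \<in> D \<Longrightarrow> y \<in> D \<Longrightarrow>
     (\<lambda>u v. u \<in> D \<and> v \<in> D \<and> tree_adj d u v)\<^sup>*\<^sup>* x y"
  unfolding is_domain_def by blast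

text \<open>A path inside D can never step up past a vertex whose parent is outside D.\<close>

lemma domain_below_root:
  assumes D: "is_domain d D" and t: "t \<in> D" "t = [] \<or> tl t \<notin> D" and x: "x \<in> D"
  shows "suffix t x"
  using domain_rtranclp[OF D t(1) x]
proof (induction rule: rtranclp_induct)
  case (step y z)
  then obtain u where u: "y = u @ t" by (auto elim: suffixE)
  from step(2) consider a where "z = a # y" | a where "y = a # z"
    unfolding tree_adj_def by auto
  then show ?case
  proof cases
    case 1
    then show ?thesis using u by (simp add: suffix_def)
  next
    case 2
    with u t step(2) show ?thesis by (cases u) (auto simp: suffix_def)
  qed
qed simp

lemma card_parent_in_domain:
  assumes D: "is_domain d D"
  shows "card {y \<in> D. y \<noteq> [] \<and> tl y \<in> D} = card D - 1"
proof -
  have fin: "finite D" using D unfolding is_domain_def by simp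
  obtain t where t: "t \<in> D" and t_min: "\<And>y. y \<in> D \<Longrightarrow> length t \<le> length y"
    using D ex_has_least_nat[of "\<lambda>t. t \<in> D" _ length] unfolding is_domain_def by blast
  have t_root: "t = [] \<or> tl t \<notin> D"
    using t_min[of "tl t"] by (cases t) auto
  have "{y \<in> D. y \<noteq> [] \<and> tl y \<in> D} = D - {t}"
  proof (intro equalityI subsetI)
    fix y assume y: "y \<in> D - {t}"
    show "y \<in> {y \<in> D. y \<noteq> [] \<and> tl y \<in> D}"
    proof (rule ccontr)
      assume "y \<notin> {y \<in> D. y \<noteq> [] \<and> tl y \<in> D}"
      then have "suffix y t" using y domain_below_root[OF D _ _ t] by auto
      moreover have "suffix t y" using y domain_below_root[OF D t t_root] by auto
      ultimately show False using y suffix_order.antisym by blast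
    qed
  qed (use t_root in auto)
  then show ?thesis using fin t by simp
qed

lemma degD_parent_split:
  assumes "D \<subseteq> tree_vert d" and "x \<in> D"
  shows "degD d D x = card {y \<in> D. y \<noteq> [] \<and> tl y = x} + (if x \<noteq> [] \<and> tl x \<in> D then 1 else 0)"
proof -
  have fin: "finite {y \<in> D. y \<noteq> [] \<and> tl y = x}"
    by (rule finite_subset[OF _ finite_tree_neighbours[of d x]])
      (use assms in \<open>auto simp: tree_adj_iff_parent subset_iff\<close>)
  have "{y \<in> D. tree_adj d x y} =
      {y \<in> D. y \<noteq> [] \<and> tl y = x} \<union> (if x \<noteq> [] \<and> tl x \<in> D then {tl x} else {})"
    using assms by (auto simp: tree_adj_iff_parent subset_iff)
  moreover have "tl x \<notin> {y \<in> D. y \<noteq> [] \<and> tl y = x}"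
    by (cases x) (auto dest: arg_cong[where f = length])
  ultimately show ?thesis unfolding degD_def using fin by auto
qed

lemma card_filter_eq_sum: "finite A \<Longrightarrow> card {x \<in> A. P x} = (\<Sum>x\<in>A. if P x then 1 else 0)"
  by (simp add: sum.inter_filter[symmetric])

lemma sum_degD:
  assumes D: "is_domain d D"
  shows "(\<Sum>x\<in>D. degD d D x) = 2 * (card D - 1)"
proof -
  have fin: "finite D" and sub: "D \<subseteq> tree_vert d" using D unfolding is_domain_def by auto
  define P where "P = {y \<in> D. y \<noteq> [] \<and> tl y \<in> D}"
  have "(\<Sum>x\<in>D. card {y \<in> D. y \<noteq> [] \<and> tl y = x}) = (\<Sum>x\<in>D. card {y \<in> P. tl y = x})"
    unfolding P_def by (intro sum.cong) (auto intro: arg_cong[where f = card])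
  also have "\<dots> = card P"
    using sum.group[of P D tl "\<lambda>_. 1::nat"] fin unfolding P_def by auto
  finally have children: "(\<Sum>x\<in>D. card {y \<in> D. y \<noteq> [] \<and> tl y = x}) = card P" .
  have parents: "(\<Sum>x\<in>D. if x \<noteq> [] \<and> tl x \<in> D then 1 else 0) = card P"
    unfolding P_def using fin by (simp add: card_filter_eq_sum)
  show ?thesis
    using degD_parent_split[OF sub] children parents card_parent_in_domain[OF D]
    by (simp add: sum.distrib P_def)
qed

lemma degD_le_card: "finite D \<Longrightarrow> x \<in> D \<Longrightarrow> degD d D x \<le> card D - 1"
  unfolding degD_def using tree_adj_irrefl
  by (subst card_Diff_singleton[symmetric]) (auto intro: card_mono)

lemma degD_ge_1:
  assumes D: "is_domain d D" and "2 \<le> card D" and x: "x \<in> D"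
  shows "1 \<le> degD d D x"
proof -
  have fin: "finite D" using D unfolding is_domain_def by simp
  have "card (D - {x}) \<noteq> 0" using \<open>2 \<le> card D\<close> x by simp
  then obtain y where y: "y \<in> D" "y \<noteq> x" by (metis DiffE all_not_in_conv card.empty singletonI)
  then obtain z where "tree_adj d x z" "z \<in> D"
    using domain_rtranclp[OF D x y(1)] by (blast elim: converse_rtranclpE)
  then have "{y \<in> D. tree_adj d x y} \<noteq> {}" by blast
  then show ?thesis unfolding degD_def using fin by (simp add: Suc_le_eq card_gt_0_iff)
qed

definition excess :: "nat \<Rightarrow> nat list set \<Rightarrow> nat" where
  "excess d D = (\<Sum>x\<in>resid d D. degD d D x - 1)"

lemma card_resid_le_excess: "card (resid d D) \<le> excess d D"
  unfolding excess_def using sum_mono[of "resid d D" "\<lambda>_. 1::nat" "\<lambda>x. degD d D x - 1"]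
  by (force simp: resid_def)

lemma excess_le: "excess d D \<le> card (resid d D) * (d - 2)"
  unfolding excess_def
  using sum_bounded_above[of "resid d D" "\<lambda>x. degD d D x - 1" "d - 2"] by (force simp: resid_def)

lemma card_interior_excess:
  assumes D: "is_domain d D" and k: "2 \<le> card D"
  shows "(d - 1) * card (D - bdry d D) + excess d D + 2 = card D"
proof -
  have fin: "finite D" using D unfolding is_domain_def by simp
  have bdry_sub: "bdry d D \<subseteq> D" and resid_sub: "resid d D \<subseteq> bdry d D"
    unfolding bdry_def resid_def by auto
  have finb: "finite (bdry d D)" using fin bdry_sub finite_subset by blast
  have interior: "degD d D x = d" if "x \<in> D - bdry d D" for x
    using that degD_le[of d D x] unfolding bdry_def by auto
  have leaf: "degD d D x = 1" if "x \<in> bdry d D - resid d D" for x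
    using that degD_ge_1[OF D k, of x] unfolding bdry_def resid_def by auto
  have ge1: "degD d D x = 1 + (degD d D x - 1)" if "x \<in> D" for x
    using degD_ge_1[OF D k that] by simp
  obtain x where "x \<in> D" using k by fastforce
  then have "1 \<le> d" using degD_ge_1[OF D k] degD_le[of d D x] by (meson le_trans)
  have "2 * (card D - 1) = (\<Sum>x\<in>D - bdry d D. degD d D x) + (\<Sum>x\<in>bdry d D. degD d D x)"
    unfolding sum_degD[OF D, symmetric] by (rule sum.subset_diff[OF bdry_sub fin])
  also have "(\<Sum>x\<in>D - bdry d D. degD d D x) = d * card (D - bdry d D)"
    using interior by simp
  also have "(\<Sum>x\<in>bdry d D. degD d D x) = (\<Sum>x\<in>bdry d D. 1 + (degD d D x - 1))"
    using ge1 bdry_sub by (intro sum.cong refl) blast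
  also have "\<dots> = card (bdry d D) + (\<Sum>x\<in>bdry d D - resid d D. degD d D x - 1) + excess d D"
    unfolding excess_def sum.distrib using sum.subset_diff[OF resid_sub finb] by simp
  also have "(\<Sum>x\<in>bdry d D - resid d D. degD d D x - 1) = 0"
    using leaf by simp
  finally have "2 * (card D - 1) = d * card (D - bdry d D) + card (bdry d D) + excess d D"
    by simp
  moreover have "d * card (D - bdry d D) = (d - 1) * card (D - bdry d D) + card (D - bdry d D)"
    using \<open>1 \<le> d\<close> by (metis add.commute le_add_diff_inverse mult.commute mult_Suc_right plus_1_eq_Suc)
  moreover have "card (bdry d D) + card (D - bdry d D) = card D"
    using card_Diff_subset[OF finb bdry_sub] card_mono[OF fin bdry_sub] by simp
  ultimately show ?thesis using k by linarith
qed

lemma card_bdry_eq: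
  assumes "2 \<le> d" and D: "is_domain d D" and k: "2 \<le> card D"
  shows "card (bdry d D) = card D - (card D - 2) div (d - 1) + excess d D div (d - 1)"
proof -
  have fin: "finite D" using D unfolding is_domain_def by simp
  define i where "i = card (D - bdry d D)"
  have id: "card D - 2 = excess d D + i * (d - 1)"
    using card_interior_excess[OF D k] unfolding i_def by (simp add: mult.commute)
  then have "(card D - 2) div (d - 1) = i + excess d D div (d - 1)"
    using \<open>2 \<le> d\<close> by simp
  moreover have "card (bdry d D) = card D - i"
    unfolding i_def using fin by (simp add: card_Diff_subset bdry_def card_mono)
  moreover have "i + excess d D div (d - 1) \<le> card D"
  proof -
    have "i \<le> i * (d - 1)" using \<open>2 \<le> d\<close> by (simp add: Suc_le_eq)
    then show ?thesis using id div_le_dividend[of "excess d D" "d - 1"] by linarith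
  qed
  ultimately show ?thesis by simp
qed

lemma is_domain_insert:
  assumes D: "is_domain d D" and x: "x \<in> D" and xy: "tree_adj d x y"
  shows "is_domain d (insert y D)"
proof -
  let ?R' = "\<lambda>u v. u \<in> insert y D \<and> v \<in> insert y D \<and> tree_adj d u v"
  have lift: "?R'\<^sup>*\<^sup>* u v" if "u \<in> D" "v \<in> D" for u v
    using domain_rtranclp[OF D that] by (rule rtranclp_mono[THEN predicate2D, rotated]) auto
  have "?R' x y" "?R' y x" using x xy tree_adj_sym[of d x y] by auto
  then have "?R'\<^sup>*\<^sup>* u x" "?R'\<^sup>*\<^sup>* x u" if "u \<in> insert y D" for u
    using that lift[of u x] lift[of x u] x by auto
  then have conn: "?R'\<^sup>*\<^sup>* u v" if "u \<in> insert y D" "v \<in> insert y D" for u v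
    using that by (meson rtranclp_trans)
  have "finite (insert y D)" "insert y D \<subseteq> tree_vert d"
    using D xy unfolding is_domain_def tree_adj_def by auto
  then show ?thesis unfolding is_domain_def using conn by (intro conjI ballI) auto
qed

lemma degD_insert:
  assumes "finite D" and "y \<notin> D" and "x \<in> D"
  shows "degD d (insert y D) x = degD d D x + (if tree_adj d x y then 1 else 0)"
proof -
  have "{z \<in> insert y D. tree_adj d x z} =
      (if tree_adj d x y then insert y {z \<in> D. tree_adj d x z} else {z \<in> D. tree_adj d x z})"
    using assms(2,3) by auto
  then show ?thesis unfolding degD_def using assms by simp
qed

lemma degD_insert_new: "degD d (insert y D) y = card {z \<in> D. tree_adj d z y}"
proof -
  have "{z \<in> insert y D. tree_adj d y z} = {z \<in> D. tree_adj d z y}"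
    using tree_adj_irrefl[of d y] tree_adj_sym[of d y] by blast
  then show ?thesis unfolding degD_def by simp
qed

text \<open>Read off from the degree sums of D and of insert y D.\<close>

lemma neighbours_of_new_vertex:
  assumes D: "is_domain d D" and x: "x \<in> D" and xy: "tree_adj d x y" and y: "y \<notin> D"
  shows "{z \<in> D. tree_adj d z y} = {x}"
proof -
  have fin: "finite D" using D unfolding is_domain_def by simp
  let ?N = "{z \<in> D. tree_adj d z y}"
  have "2 * card D = (\<Sum>z\<in>insert y D. degD d (insert y D) z)"
    using sum_degD[OF is_domain_insert[OF D x xy]] fin y by simp
  also have "\<dots> = card ?N + (\<Sum>z\<in>D. degD d (insert y D) z)"
    using fin y degD_insert_new by simp
  also have "(\<Sum>z\<in>D. degD d (insert y D) z) = (\<Sum>z\<in>D. degD d D z) + card ?N"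
  proof -
    have "(\<Sum>z\<in>D. degD d (insert y D) z) = (\<Sum>z\<in>D. degD d D z + (if tree_adj d z y then 1 else 0))"
      using y by (intro sum.cong refl) (auto simp: degD_insert[OF fin y])
    then show ?thesis using fin by (simp add: sum.distrib card_filter_eq_sum)
  qed
  finally have "2 * card D = 2 * card ?N + 2 * (card D - 1)"
    using sum_degD[OF D] by simp
  moreover have "card D \<noteq> 0" using x fin by auto
  ultimately have "card ?N = 1" by linarith
  moreover have "x \<in> ?N" using x xy by simp
  ultimately show ?thesis by (metis card_1_singletonE singletonD)
qed

lemma bdry_nonempty:
  assumes "2 \<le> d" and D: "is_domain d D"
  shows "bdry d D \<noteq> {}"
proof
  assume "bdry d D = {}"
  then have "d \<le> degD d D x" if "x \<in> D" for x using that unfolding bdry_def by auto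
  then have "card D * d \<le> 2 * (card D - 1)"
    using sum_bounded_below[of D d "degD d D"] sum_degD[OF D] by simp
  moreover have "card D \<noteq> 0" using D unfolding is_domain_def by simp
  moreover have "card D * 2 \<le> card D * d" using \<open>2 \<le> d\<close> by simp
  ultimately show False by linarith
qed

lemma grow_domain:
  assumes D: "is_domain d D" and r: "r \<in> bdry d D" and rs: "resid d D \<subseteq> {r}"
  obtains y where "y \<notin> D" and "is_domain d (insert y D)" and "resid d (insert y D) \<subseteq> {r}"
proof -
  have fin: "finite D" and rD: "r \<in> D" and "r \<in> tree_vert d" "degD d D r < d"
    using D r unfolding is_domain_def bdry_def by auto
  then obtain y where ry: "tree_adj d r y" and y: "y \<notin> D"
    using exists_neighbour_notin by blast
  have D': "is_domain d (insert y D)" by (rule is_domain_insert[OF D rD ry])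
  have N: "{z \<in> D. tree_adj d z y} = {r}" by (rule neighbours_of_new_vertex[OF D rD ry y])
  have "x \<in> {r}" if x: "x \<in> resid d (insert y D)" for x
  proof (rule ccontr)
    assume "x \<notin> {r}"
    have "x \<noteq> y" using x degD_insert_new N unfolding resid_def by auto
    then have xD: "x \<in> D" using x unfolding resid_def bdry_def by auto
    then have "\<not> tree_adj d x y" using N \<open>x \<notin> {r}\<close> by blast
    then have "degD d (insert y D) x = degD d D x" using degD_insert[OF fin y xD] by simp
    then have "x \<in> resid d D" using x xD unfolding resid_def bdry_def by auto
    with rs \<open>x \<notin> {r}\<close> show False by blast
  qed
  then show ?thesis using that y D' by blast
qed

lemma exists_domain_card_resid_le_1:
  assumes "2 \<le> d" and "1 \<le> k"
  shows "\<exists>D. is_domain d D \<and> card D = k \<and> card (resid d D) \<le> 1"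
  using \<open>1 \<le> k\<close>
proof (induction k rule: nat_induct_at_least)
  case base
  have "is_domain d {[]}" unfolding is_domain_def tree_vert_def by auto
  moreover have "card (resid d {[]}) \<le> 1"
    using card_mono[of "{[]}" "resid d {[]}"] unfolding resid_def bdry_def by auto
  ultimately show ?case by force
next
  case (Suc k)
  then obtain D where D: "is_domain d D" "card D = k" and "card (resid d D) \<le> 1" by blast
  moreover have "finite (resid d D)"
    using D unfolding is_domain_def resid_def bdry_def by simp
  ultimately obtain r where "r \<in> bdry d D" "resid d D \<subseteq> {r}"
  proof (cases "resid d D = {}")
    case True
    then show ?thesis using that bdry_nonempty[OF \<open>2 \<le> d\<close> D(1)] by blast
  next
    case False
    with \<open>card (resid d D) \<le> 1\<close> \<open>finite (resid d D)\<close> obtain r where "resid d D = {r}"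
      by (metis card_0_eq card_1_singletonE le_neq_implies_less less_one)
    then show ?thesis using that unfolding resid_def by blast
  qed
  then obtain y where "y \<notin> D" "is_domain d (insert y D)" "resid d (insert y D) \<subseteq> {r}"
    using grow_domain D(1) by blast
  moreover have "finite D" using D unfolding is_domain_def by simp
  ultimately show ?case
    using D(2) card_mono[of "{r}" "resid d (insert y D)"] by (intro exI[of _ "insert y D"]) auto
qed

lemma Iso_eq:
  assumes "2 \<le> d" and "2 \<le> k"
  shows "Iso d k = k - (k - 2) div (d - 1)"
  unfolding Iso_def
proof (rule cInf_eq_minimum)
  obtain E where E: "is_domain d E" "card E = k" "card (resid d E) \<le> 1"
    using exists_domain_card_resid_le_1[OF \<open>2 \<le> d\<close>, of k] \<open>2 \<le> k\<close> by auto
  have "excess d E < d - 1"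
    using excess_le[of d E] E(3) \<open>2 \<le> d\<close> mult_le_mono1[OF E(3), of "d - 2"] by linarith
  then have "card (bdry d E) = k - (k - 2) div (d - 1)"
    using card_bdry_eq[OF \<open>2 \<le> d\<close> E(1)] E(2) \<open>2 \<le> k\<close> by simp
  then show "k - (k - 2) div (d - 1) \<in> {card (bdry d D) |D. is_domain d D \<and> card D = k}"
    using E by (intro CollectI exI[of _ E]) simp
next
  fix b assume "b \<in> {card (bdry d D) |D. is_domain d D \<and> card D = k}"
  then obtain D where "b = card (bdry d D)" "is_domain d D" "card D = k" by blast
  then show "k - (k - 2) div (d - 1) \<le> b"
    using card_bdry_eq[OF \<open>2 \<le> d\<close>, of D] \<open>2 \<le> k\<close> by simp
qed

lemma optimal_iff_excess:
  assumes "2 \<le> d" and D: "is_domain d D" and "2 \<le> card D"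
  shows "optimal d D \<longleftrightarrow> excess d D \<le> d - 2"
proof -
  have "optimal d D \<longleftrightarrow> excess d D div (d - 1) = 0"
    unfolding optimal_def using card_bdry_eq[OF assms] Iso_eq[OF \<open>2 \<le> d\<close> \<open>2 \<le> card D\<close>]
    by simp
  also have "\<dots> \<longleftrightarrow> excess d D \<le> d - 2" using \<open>2 \<le> d\<close> by (auto simp: div_eq_0_iff)
  finally show ?thesis .
qed

lemma bdry_eq_self:
  assumes "finite D" and "card D \<le> d"
  shows "bdry d D = D"
proof -
  have "degD d D x < d" if "x \<in> D" for x
  proof -
    have "card D > 0" using assms that by (auto simp: card_gt_0_iff)
    then show ?thesis using degD_le_card[OF \<open>finite D\<close> that, of d] assms by linarith
  qed
  then show ?thesis unfolding bdry_def by auto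
qed

lemma optimal_if_card_le:
  assumes D: "is_domain d D" and "card D \<le> d"
  shows "optimal d D"
proof -
  have same: "card (bdry d D') = card D" if "is_domain d D'" "card D' = card D" for D'
    using bdry_eq_self[of D' d] that \<open>card D \<le> d\<close> unfolding is_domain_def by simp
  then have "{card (bdry d D') |D'. is_domain d D' \<and> card D' = card D} = {card D}"
    using D by (auto intro!: exI[of _ D])
  then show ?thesis unfolding optimal_def Iso_def using same[OF D refl] by simp
qed

theorem mainTheorem9:
  fixes d :: nat
  assumes "d \<ge> 2"
  shows "(\<forall>D. is_domain d D \<and> card D \<le> d \<longrightarrow> optimal d D)
    \<and> (\<forall>D. is_domain d D \<and> card D \<ge> 2 \<and> full d D \<longrightarrow> optimal d D)
    \<and> (\<forall>D. is_domain d D \<and> card D \<ge> 2 \<and> card (resid d D) = 1 \<longrightarrow> optimal d D)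
    \<and> (\<forall>D. is_domain d D \<and> card D \<ge> 2 \<and> optimal d D \<longrightarrow> card (resid d D) \<le> d - 2)"
proof (intro conjI allI impI)
  fix D
  show "is_domain d D \<and> card D \<le> d \<Longrightarrow> optimal d D"
    using optimal_if_card_le by blast
  show "is_domain d D \<and> 2 \<le> card D \<and> full d D \<Longrightarrow> optimal d D"
    using optimal_iff_excess[OF assms] by (simp add: full_def excess_def)
  show "is_domain d D \<and> 2 \<le> card D \<and> card (resid d D) = 1 \<Longrightarrow> optimal d D"
    using optimal_iff_excess[OF assms] excess_le[of d D] by simp
  show "is_domain d D \<and> 2 \<le> card D \<and> optimal d D \<Longrightarrow> card (resid d D) \<le> d - 2"
    using optimal_iff_excess[OF assms] card_resid_le_excess[of d D] by auto
qed

end
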